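(* Let $g\in\mathbb{R}^n$ be nonzero, $H\in\mathbb{S}^n$, $\epsilon>0$, $\delta>0$, $\zeta\in(0,1)$, and let $k_{\max}$ be any iteration limit. The step $s$ returned by Algorithm 2 (described in the context) satisfies \[ g^Ts+\tfrac12 s^THs\ \le\ -\tfrac12\,\epsilon\,\|s\|^2 . \]
   Context: $\mathbb{S}^n$ is the set of real symmetric $n\times n$ matrices, $\|\cdot\|$ the Euclidean norm; all computations are in exact arithmetic. Algorithm 2 (truncated CG for $\min_s g^Ts+\tfrac12 s^T(H+2\epsilon I)s$ s.t. $\|s\|\le\delta$): inputs nonzero $g$, $H\in\mathbb{S}^n$, $\epsilon>0$, $\delta>0$, $\zeta\in(0,1)$, and an iteration limit $k_{\max}\le n$ (either $n$ or a smaller cap). Set $y_0=0$, $r_0=g$, $p_0=-g$, $j=0$. While $j<k_{\max}$: (a) if $p_j^T(H+2\epsilon I)p_j\le\epsilon\|p_j\|^2$, compute $\sigma\ge0$ with $\|y_j+\sigma p_j\|=\delta$ and return $s=y_j+\sigma p_j$ with flag BND-NEG; (b) set $\alpha_j=\|r_j\|^2/(p_j^T(H+2\epsilon I)p_j)$ and $y_{j+1}=y_j+\alpha_jp_j$; if $\|y_{j+1}\|\ge\delta$, compute $\sigma\ge0$ with $\|y_j+\sigma p_j\|=\delta$ and return $s=y_j+\sigma p_j$ with flag BND-NORM; (c) set $r_{j+1}=r_j+\alpha_j(H+2\epsilon I)p_j$; if $\|r_{j+1}\|\le\tfrac{\zeta}{2}\min\{\|g\|,\epsilon\|y_{j+1}\|\}$,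 return $s=y_{j+1}$ with flag INT-RES; (d) set $\beta_{j+1}=\|r_{j+1}\|^2/\|r_j\|^2$, $p_{j+1}=-r_{j+1}+\beta_{j+1}p_j$, $j\leftarrow j+1$. If the loop exits, return the current iterate $s=y_j$ with flag INT-MAX. *)

theory Defs
  imports "HOL-Analysis.Analysis"
begin

datatype cg_flag = BND_NEG | BND_NORM | INT_RES | INT_MAX

definition cg_boundary :: "real \<Rightarrow> real^'n \<Rightarrow> real^'n \<Rightarrow> real^'n" where
  "cg_boundary delta y p =
     y + (SOME \<sigma>. \<sigma> \<ge> 0 \<and> norm (y + \<sigma> *\<^sub>R p) = delta) *\<^sub>R p"

text \<open>The while loop of Algorithm 2; the first argument is the number of remaining
  iterations (k_max - j). Arguments: fuel, g, H, eps, delta, zeta, y_j, r_j, p_j.\<close>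
fun cg_loop :: "nat \<Rightarrow> real^'n \<Rightarrow> real^'n^'n \<Rightarrow> real \<Rightarrow> real \<Rightarrow> real
                 \<Rightarrow> real^'n \<Rightarrow> real^'n \<Rightarrow> real^'n \<Rightarrow> (real^'n) \<times> cg_flag" where
  "cg_loop 0 g H eps delta zeta y r p = (y, INT_MAX)"
| "cg_loop (Suc f) g H eps delta zeta y r p =
     (let A = H + mat (2 * eps) in
      if p \<bullet> (A *v p) \<le> eps * (norm p)\<^sup>2 then (cg_boundary delta y p, BND_NEG)
      else
        (let \<alpha> = (norm r)\<^sup>2 / (p \<bullet> (A *v p));
             y' = y + \<alpha> *\<^sub>R p in
         if norm y' \<ge> delta then (cg_boundary delta y p, BND_NORM)
         else
           (let r' = r + \<alpha> *\<^sub>R (A *v p) in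
            if norm r' \<le> zeta / 2 * min (norm g) (eps * norm y') then (y', INT_RES)
            else
              (let \<beta> = (norm r')\<^sup>2 / (norm r)\<^sup>2;
                   p' = - r' + \<beta> *\<^sub>R p in
               cg_loop f g H eps delta zeta y' r' p'))))"

definition algorithm2 :: "real^'n \<Rightarrow> real^'n^'n \<Rightarrow> real \<Rightarrow> real \<Rightarrow> real \<Rightarrow> nat
                           \<Rightarrow> (real^'n) \<times> cg_flag" where
  "algorithm2 g H eps delta zeta kmax = cg_loop kmax g H eps delta zeta 0 g (- g)"

end

theory Submission
  imports Defs
begin

text \<open>Write \<open>A = H + 2\<epsilon>I\<close> and \<open>m(x) = g\<^sup>Tx + x\<^sup>TAx/2\<close>; the claim is
  \<open>m(s) \<le> \<epsilon>\<parallel>s\<parallel>\<^sup>2/2\<close>. While every search direction has positive curvature, the CG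
  iterates decrease \<open>m\<close> from \<open>m(0) = 0\<close>, and \<open>m\<close> keeps decreasing along \<open>p\<^sub>k\<close> up to the
  step \<open>\<alpha>\<^sub>k\<close>. This settles the interior exits and BND-NORM, where the boundary point
  precedes \<open>y\<^sub>k + \<alpha>\<^sub>kp\<^sub>k\<close> by convexity of the norm. At BND-NEG the curvature bound
  \<open>p\<^sup>TAp \<le> \<epsilon>\<parallel>p\<parallel>\<^sup>2\<close> is combined with Steihaug's observation \<open>y\<^sub>k\<^sup>Tp\<^sub>k \<ge> 0\<close>, which
  follows from the orthogonality of the residuals and the \<open>A\<close>-conjugacy of the
  directions.\<close>

lemma boundary_param_le:
  fixes y p :: "'a::real_normed_vector"
  assumes inside: "norm y < delta" and "0 \<le> t" and outside: "delta \<le> norm (y + t *\<^sub>R p)"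
    and boundary: "norm (y + \<sigma> *\<^sub>R p) = delta"
  shows "\<sigma> \<le> t"
proof (rule ccontr)
  assume "\<not> \<sigma> \<le> t"
  define \<theta> where "\<theta> = t / \<sigma>"
  have "0 \<le> \<theta>" "\<theta> < 1" "\<theta> * \<sigma> = t"
    using \<open>\<not> \<sigma> \<le> t\<close> \<open>0 \<le> t\<close> by (auto simp: \<theta>_def)
  then have "y + t *\<^sub>R p = (1 - \<theta>) *\<^sub>R y + \<theta> *\<^sub>R (y + \<sigma> *\<^sub>R p)"
    by (auto simp: algebra_simps)
  then have "norm (y + t *\<^sub>R p) \<le> (1 - \<theta>) * norm y + \<theta> * delta"
    using norm_triangle_ineq[of "(1 - \<theta>) *\<^sub>R y" "\<theta> *\<^sub>R (y + \<sigma> *\<^sub>R p)"]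
      \<open>0 \<le> \<theta>\<close> \<open>\<theta> < 1\<close> boundary by simp
  also have "\<dots> < delta"
    using mult_strict_left_mono[OF inside, of "1 - \<theta>"] \<open>\<theta> < 1\<close> by (simp add: algebra_simps)
  finally show False
    using outside by simp
qed

lemma boundary_param_exists:
  fixes y p :: "'a::real_normed_vector"
  assumes "norm y < delta" and "p \<noteq> 0"
  shows "\<exists>\<sigma>\<ge>0. norm (y + \<sigma> *\<^sub>R p) = delta"
proof -
  define b where "b = (delta + norm y) / norm p"
  have "0 \<le> delta + norm y"
    using assms(1) norm_ge_zero[of y] by linarith
  then have "0 \<le> b"
    by (simp add: b_def)
  have "delta = norm (b *\<^sub>R p) - norm y"
    using assms(2) \<open>0 \<le> delta + norm y\<close> by (simp add: b_def)
  also have "\<dots> \<le> norm (y + b *\<^sub>R p)"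
    by (metis add.commute norm_diff_ineq)
  finally have "delta \<le> norm (y + b *\<^sub>R p)" .
  moreover have "continuous_on {0..b} (\<lambda>s. norm (y + s *\<^sub>R p))"
    by (intro continuous_intros)
  ultimately show ?thesis
    using IVT'[of "\<lambda>s. norm (y + s *\<^sub>R p)" 0 delta b] assms(1) \<open>0 \<le> b\<close> by auto
qed

lemma cg_boundary_zero [simp]: "cg_boundary delta y 0 = y"
  by (simp add: cg_boundary_def)

lemma cg_boundary_obtain:
  assumes "norm y < delta" and "p \<noteq> 0"
  obtains \<sigma> where "0 \<le> \<sigma>" "norm (y + \<sigma> *\<^sub>R p) = delta"
    "cg_boundary delta y p = y + \<sigma> *\<^sub>R p"
  using someI_ex[OF boundary_param_exists[OF assms]] by (auto simp: cg_boundary_def)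

lemma norm_add_scaleR_square:
  fixes x y :: "'a::real_inner"
  shows "(norm (x + t *\<^sub>R y))\<^sup>2 = (norm x)\<^sup>2 + 2 * t * (x \<bullet> y) + t\<^sup>2 * (norm y)\<^sup>2"
  unfolding power2_norm_eq_inner
  by (simp add: inner_add_left inner_add_right inner_commute power2_eq_square)

locale conjugate_gradient =
  fixes A :: "'a::real_inner \<Rightarrow> 'a" and g :: 'a
  assumes linear: "linear A"
    and self_adjoint: "\<And>x y. A x \<bullet> y = x \<bullet> A y"
begin

lemmas A_add = linear_add[OF linear] and A_diff = linear_diff[OF linear]
  and A_scaleR = linear_scale[OF linear] and A_zero = linear_0[OF linear]

fun cg_iterates :: "nat \<Rightarrow> 'a \<times> 'a \<times> 'a" where
  "cg_iterates 0 = (0, g, - g)"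
| "cg_iterates (Suc k) =
     (let (y, r, p) = cg_iterates k;
          \<alpha> = (norm r)\<^sup>2 / (p \<bullet> A p);
          r' = r + \<alpha> *\<^sub>R A p
      in (y + \<alpha> *\<^sub>R p, r', - r' + ((norm r')\<^sup>2 / (norm r)\<^sup>2) *\<^sub>R p))"

definition cg_y :: "nat \<Rightarrow> 'a" where "cg_y k = fst (cg_iterates k)"
definition cg_r :: "nat \<Rightarrow> 'a" where "cg_r k = fst (snd (cg_iterates k))"
definition cg_p :: "nat \<Rightarrow> 'a" where "cg_p k = snd (snd (cg_iterates k))"

definition cg_alpha :: "nat \<Rightarrow> real" where
  "cg_alpha k = (norm (cg_r k))\<^sup>2 / (cg_p k \<bullet> A (cg_p k))"

definition cg_beta :: "nat \<Rightarrow> real" where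
  "cg_beta k = (norm (cg_r (Suc k)))\<^sup>2 / (norm (cg_r k))\<^sup>2"

lemma cg_0 [simp]: "cg_y 0 = 0" "cg_r 0 = g" "cg_p 0 = - g"
  by (simp_all add: cg_y_def cg_r_def cg_p_def)

lemma cg_Suc:
  "cg_y (Suc k) = cg_y k + cg_alpha k *\<^sub>R cg_p k"
  "cg_r (Suc k) = cg_r k + cg_alpha k *\<^sub>R A (cg_p k)"
  "cg_p (Suc k) = - cg_r (Suc k) + cg_beta k *\<^sub>R cg_p k"
  by (simp_all add: cg_y_def cg_r_def cg_p_def cg_alpha_def cg_beta_def Let_def split: prod.split)

lemma cg_r_eq_p:
  "cg_r 0 = - cg_p 0"
  "cg_r (Suc k) = cg_beta k *\<^sub>R cg_p k - cg_p (Suc k)"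
  by (simp_all add: cg_Suc(3))

lemma cg_r_eq_gradient: "cg_r k = g + A (cg_y k)"
  by (induction k) (simp_all add: cg_Suc A_add A_scaleR A_zero)

lemma cg_y_eq_sum: "cg_y k = (\<Sum>i<k. cg_alpha i *\<^sub>R cg_p i)"
  by (induction k) (simp_all add: cg_Suc)

definition model :: "'a \<Rightarrow> real" where
  "model x = g \<bullet> x + (x \<bullet> A x) / 2"

lemma model_along_line:
  "model (x + t *\<^sub>R p) = model x + t * ((g + A x) \<bullet> p) + t\<^sup>2 / 2 * (p \<bullet> A p)"
  using self_adjoint[of x p] inner_commute[of p "A x"]
  by (simp add: model_def A_add A_scaleR inner_add_left inner_add_right algebra_simps
      power2_eq_square)

text \<open>Before iteration \<open>k\<close> of Algorithm 2 this holds because the BND-NEG test never fired.\<close>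
definition positive_curvature :: "nat \<Rightarrow> bool" where
  "positive_curvature k \<longleftrightarrow> (\<forall>i<k. 0 < cg_p i \<bullet> A (cg_p i))"

lemma positive_curvature_0 [simp]: "positive_curvature 0"
  by (simp add: positive_curvature_def)

lemma positive_curvature_Suc:
  "positive_curvature (Suc k) \<longleftrightarrow> positive_curvature k \<and> 0 < cg_p k \<bullet> A (cg_p k)"
  by (auto simp: positive_curvature_def less_Suc_eq)

lemma cg_alpha_mult_curvature:
  "0 < cg_p k \<bullet> A (cg_p k) \<Longrightarrow> cg_alpha k * (cg_p k \<bullet> A (cg_p k)) = (norm (cg_r k))\<^sup>2"
  by (simp add: cg_alpha_def)

lemma cg_alpha_nonneg: "0 < cg_p k \<bullet> A (cg_p k) \<Longrightarrow> 0 \<le> cg_alpha k"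
  by (simp add: cg_alpha_def)

lemma cg_beta_nonneg: "0 \<le> cg_beta k"
  by (simp add: cg_beta_def)

text \<open>The CG step length is the exact line minimiser, so the new residual is orthogonal
  to the old search direction.\<close>
lemma cg_r_Suc_inner_p:
  assumes "cg_r k \<bullet> cg_p k = - (norm (cg_r k))\<^sup>2" and "0 < cg_p k \<bullet> A (cg_p k)"
  shows "cg_r (Suc k) \<bullet> cg_p k = 0"
  using assms cg_alpha_mult_curvature[OF assms(2)]
  by (simp add: cg_Suc(2) inner_add_left self_adjoint)

lemma cg_r_inner_p:
  "positive_curvature k \<Longrightarrow> cg_r k \<bullet> cg_p k = - (norm (cg_r k))\<^sup>2"
proof (induction k)
  case 0
  show ?case by (simp add: power2_norm_eq_inner)
next
  case (Suc k)
  then have "cg_r (Suc k) \<bullet> cg_p k = 0"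
    by (intro cg_r_Suc_inner_p) (simp_all add: positive_curvature_Suc)
  then show ?case
    by (simp add: cg_Suc(3)[of k] inner_add_right inner_diff_right power2_norm_eq_inner)
qed

lemma model_along_cg_p:
  "positive_curvature k \<Longrightarrow>
   model (cg_y k + t *\<^sub>R cg_p k)
     = model (cg_y k) - t * (norm (cg_r k))\<^sup>2 + t\<^sup>2 / 2 * (cg_p k \<bullet> A (cg_p k))"
  using model_along_line[of "cg_y k" t "cg_p k"] cg_r_inner_p
  by (simp add: cg_r_eq_gradient[symmetric])

lemma model_decreases_along_cg_p:
  assumes "positive_curvature (Suc k)" and "0 \<le> \<sigma>" and "\<sigma> \<le> cg_alpha k"
  shows "model (cg_y k + \<sigma> *\<^sub>R cg_p k) \<le> model (cg_y k)"
proof -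
  have curv: "0 < cg_p k \<bullet> A (cg_p k)" and "positive_curvature k"
    using assms(1) by (simp_all add: positive_curvature_Suc)
  have "\<sigma>\<^sup>2 * (cg_p k \<bullet> A (cg_p k)) \<le> \<sigma> * (cg_alpha k * (cg_p k \<bullet> A (cg_p k)))"
    using mult_left_mono[OF mult_right_mono[OF assms(3)], of "cg_p k \<bullet> A (cg_p k)" \<sigma>] assms(2) curv
    by (simp add: power2_eq_square mult.assoc)
  then have "\<sigma>\<^sup>2 * (cg_p k \<bullet> A (cg_p k)) \<le> \<sigma> * (norm (cg_r k))\<^sup>2"
    by (simp add: cg_alpha_mult_curvature[OF curv])
  moreover have "0 \<le> \<sigma> * (norm (cg_r k))\<^sup>2"
    using assms(2) by simp
  ultimately show ?thesis
    by (simp add: model_along_cg_p[OF \<open>positive_curvature k\<close>])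
qed

lemma model_cg_y_nonpos: "positive_curvature k \<Longrightarrow> model (cg_y k) \<le> 0"
proof (induction k)
  case 0
  show ?case by (simp add: model_def)
next
  case (Suc k)
  then have "0 < cg_p k \<bullet> A (cg_p k)" and "positive_curvature k"
    by (simp_all add: positive_curvature_Suc)
  then show ?case
    using model_decreases_along_cg_p[OF Suc.prems, of "cg_alpha k"] Suc.IH
    by (simp add: cg_Suc(1) cg_alpha_nonneg)
qed

lemma cg_p_eq_0_if_r_eq_0:
  assumes "cg_r k = 0"
  shows "cg_p k = 0"
proof (cases k)
  case 0
  then show ?thesis
    using assms cg_r_eq_p(1) by (metis neg_equal_0_iff_equal)
next
  case (Suc j)
  then show ?thesis
    using assms by (simp add: cg_Suc(3) cg_beta_def)
qed

text \<open>Since \<open>x / 0 = 0\<close>, a zero residual makes its own search direction zero, so positive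
  curvature excludes zero residuals without any hypothesis on \<open>g\<close>.\<close>
lemma cg_r_nonzero: "positive_curvature k \<Longrightarrow> i < k \<Longrightarrow> cg_r i \<noteq> 0"
  using cg_p_eq_0_if_r_eq_0[of i] by (auto simp: positive_curvature_def A_zero)

lemma cg_alpha_pos: "positive_curvature k \<Longrightarrow> i < k \<Longrightarrow> 0 < cg_alpha i"
  using cg_r_nonzero[of k i] by (simp add: positive_curvature_def cg_alpha_def)

lemma cg_r_inner_A_p:
  assumes conj: "\<And>i. i < k \<Longrightarrow> cg_p i \<bullet> A (cg_p k) = 0" and "i \<le> k"
  shows "cg_r i \<bullet> A (cg_p k) = (if i = k then - (cg_p k \<bullet> A (cg_p k)) else 0)"
proof (cases i)
  case 0
  then show ?thesis
    using conj[of 0] by (cases k) (simp_all add: cg_r_eq_p(1))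
next
  case (Suc j)
  then have "cg_p j \<bullet> A (cg_p k) = 0"
    using conj \<open>i \<le> k\<close> by simp
  then show ?thesis
    using conj[of i] \<open>i \<le> k\<close> Suc by (simp add: cg_r_eq_p(2) inner_diff_left)
qed

context
  fixes k :: nat
  assumes curv: "positive_curvature (Suc k)"
    and IH: "\<And>i. i < k \<Longrightarrow> cg_r i \<bullet> cg_r k = 0 \<and> cg_p i \<bullet> A (cg_p k) = 0"
begin

lemma cg_residuals_orthogonal_step:
  assumes "i \<le> k"
  shows "cg_r i \<bullet> cg_r (Suc k) = 0"
proof -
  have curv_k: "0 < cg_p k \<bullet> A (cg_p k)"
    using curv by (simp add: positive_curvature_Suc)
  have rA: "cg_r i \<bullet> A (cg_p k) = (if i = k then - (cg_p k \<bullet> A (cg_p k)) else 0)"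
    using cg_r_inner_A_p IH assms by blast
  have "cg_r i \<bullet> cg_r (Suc k) = cg_r i \<bullet> cg_r k + cg_alpha k * (cg_r i \<bullet> A (cg_p k))"
    by (simp add: cg_Suc(2) inner_add_right)
  also have "\<dots> = 0"
  proof (cases "i = k")
    case True
    then show ?thesis
      using rA cg_alpha_mult_curvature[OF curv_k] by (simp add: power2_norm_eq_inner)
  next
    case False
    then show ?thesis
      using rA IH[of i] assms by simp
  qed
  finally show ?thesis .
qed

lemma cg_directions_conjugate_step:
  assumes "i \<le> k"
  shows "cg_p i \<bullet> A (cg_p (Suc k)) = 0"
proof -
  have curv_i: "0 < cg_p i \<bullet> A (cg_p i)" and "0 < cg_alpha i"
    using curv assms cg_alpha_pos[OF curv] by (auto simp: positive_curvature_def)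
  have p_Suc_expansion: "cg_p i \<bullet> A (cg_p (Suc k))
      = cg_beta k * (cg_p i \<bullet> A (cg_p k)) - A (cg_p i) \<bullet> cg_r (Suc k)"
    by (simp add: cg_Suc(3)[of k] A_diff A_scaleR inner_diff_right self_adjoint)
  \<comment> \<open>the residual recurrence expresses \<open>A p\<^sub>i\<close> through two consecutive residuals\<close>
  have "cg_alpha i * (A (cg_p i) \<bullet> cg_r (Suc k)) = cg_r (Suc i) \<bullet> cg_r (Suc k) - cg_r i \<bullet> cg_r (Suc k)"
    by (simp add: cg_Suc(2)[of i] inner_add_left)
  also have "\<dots> = (if i = k then (norm (cg_r (Suc k)))\<^sup>2 else 0)"
    using cg_residuals_orthogonal_step[of i] cg_residuals_orthogonal_step[of "Suc i"] assms
    by (auto simp: power2_norm_eq_inner)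
  finally have Ap_r: "cg_alpha i * (A (cg_p i) \<bullet> cg_r (Suc k))
      = (if i = k then (norm (cg_r (Suc k)))\<^sup>2 else 0)" .
  show ?thesis
  proof (cases "i = k")
    case True
    have "cg_beta k * (cg_p k \<bullet> A (cg_p k)) = (norm (cg_r (Suc k)))\<^sup>2 / cg_alpha k"
      using curv_i cg_r_nonzero[OF curv, of k] True by (simp add: cg_alpha_def cg_beta_def)
    moreover have "A (cg_p k) \<bullet> cg_r (Suc k) = (norm (cg_r (Suc k)))\<^sup>2 / cg_alpha k"
      using Ap_r \<open>0 < cg_alpha i\<close> True by (simp add: field_simps)
    ultimately show ?thesis
      using p_Suc_expansion True by simp
  next
    case False
    then show ?thesis
      using p_Suc_expansion Ap_r IH[of i] assms \<open>0 < cg_alpha i\<close> by simp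
  qed
qed

end

lemma cg_conjugate:
  "positive_curvature k \<Longrightarrow> i < k \<Longrightarrow> cg_r i \<bullet> cg_r k = 0 \<and> cg_p i \<bullet> A (cg_p k) = 0"
proof (induction k arbitrary: i)
  case 0
  then show ?case by simp
next
  case (Suc k)
  have "\<And>j. j < k \<Longrightarrow> cg_r j \<bullet> cg_r k = 0 \<and> cg_p j \<bullet> A (cg_p k) = 0"
    using Suc.IH Suc.prems(1) by (simp add: positive_curvature_Suc)
  then show ?case
    using cg_residuals_orthogonal_step cg_directions_conjugate_step Suc.prems by simp
qed

lemma cg_r_inner_earlier_p: "positive_curvature k \<Longrightarrow> i < k \<Longrightarrow> cg_r k \<bullet> cg_p i = 0"
proof (induction i)
  case 0
  then show ?case
    using cg_conjugate[of k 0] by (simp add: inner_commute)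
next
  case (Suc i)
  then show ?case
    using cg_conjugate[of k "Suc i"]
    by (simp add: cg_Suc(3) inner_add_right inner_diff_right inner_commute)
qed

lemma cg_p_inner_nonneg: "positive_curvature k \<Longrightarrow> i \<le> k \<Longrightarrow> 0 \<le> cg_p i \<bullet> cg_p k"
proof (induction k)
  case 0
  then show ?case by simp
next
  case (Suc k)
  show ?case
  proof (cases "i = Suc k")
    case False
    with Suc.prems have "0 \<le> cg_p i \<bullet> cg_p k" and "cg_r (Suc k) \<bullet> cg_p i = 0"
      using Suc.IH cg_r_inner_earlier_p by (simp_all add: positive_curvature_Suc)
    then show ?thesis
      using cg_beta_nonneg[of k] by (simp add: cg_Suc(3)[of k] inner_diff_right inner_commute)
  qed simp
qed

lemma cg_y_inner_p_nonneg: "positive_curvature k \<Longrightarrow> 0 \<le> cg_y k \<bullet> cg_p k"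
  unfolding cg_y_eq_sum inner_sum_left
  by (intro sum_nonneg mult_nonneg_nonneg)
    (simp_all add: less_imp_le cg_alpha_pos cg_p_inner_nonneg)

lemma model_bound_at_negative_curvature:
  assumes "positive_curvature k" and "0 \<le> \<sigma>" and "0 \<le> eps"
    and neg: "cg_p k \<bullet> A (cg_p k) \<le> eps * (norm (cg_p k))\<^sup>2"
  shows "model (cg_y k + \<sigma> *\<^sub>R cg_p k) \<le> eps / 2 * (norm (cg_y k + \<sigma> *\<^sub>R cg_p k))\<^sup>2"
proof -
  have "model (cg_y k + \<sigma> *\<^sub>R cg_p k) \<le> \<sigma>\<^sup>2 / 2 * (cg_p k \<bullet> A (cg_p k))"
    using model_along_cg_p[OF assms(1), of \<sigma>] model_cg_y_nonpos[OF assms(1)]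
      mult_nonneg_nonneg[OF assms(2) zero_le_power2[of "norm (cg_r k)"]] by simp
  also have "\<dots> \<le> eps / 2 * (\<sigma>\<^sup>2 * (norm (cg_p k))\<^sup>2)"
    using mult_left_mono[OF neg, of "\<sigma>\<^sup>2 / 2"] by (simp add: mult_ac)
  also have "\<dots> \<le> eps / 2 *
      ((norm (cg_y k))\<^sup>2 + 2 * \<sigma> * (cg_y k \<bullet> cg_p k) + \<sigma>\<^sup>2 * (norm (cg_p k))\<^sup>2)"
    using cg_y_inner_p_nonneg[OF assms(1)] assms(2,3) by (intro mult_left_mono) simp_all
  also have "\<dots> = eps / 2 * (norm (cg_y k + \<sigma> *\<^sub>R cg_p k))\<^sup>2"
    by (simp add: norm_add_scaleR_square)
  finally show ?thesis .
qed

end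

lemma mat_mult_vector: "mat c *v x = c *\<^sub>R (x :: real^'n)"
  by (simp add: vec_eq_iff matrix_vector_mult_def mat_def if_distrib if_distribR cong del: if_weak_cong)

locale truncated_cg =
  fixes g :: "real^'n" and H :: "real^'n^'n" and eps :: real
  assumes symmetric: "transpose H = H" and eps_nonneg: "0 \<le> eps"
begin

lemma shifted_matrix_mult: "(H + mat (2 * eps)) *v x = H *v x + (2 * eps) *\<^sub>R x"
  by (simp add: matrix_vector_mult_add_rdistrib mat_mult_vector)

lemma H_self_adjoint: "(H *v x) \<bullet> y = x \<bullet> (H *v y)"
  by (metis dot_lmul_matrix symmetric transpose_matrix_vector)

sublocale conjugate_gradient "\<lambda>x. (H + mat (2 * eps)) *v x" g
  by (intro conjugate_gradient.intro matrix_vector_mul_linear)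
    (simp add: shifted_matrix_mult H_self_adjoint inner_add_left inner_add_right)

lemma model_eq: "model s = g \<bullet> s + 1/2 * (s \<bullet> (H *v s)) + eps * (norm s)\<^sup>2"
  unfolding model_def by (simp add: shifted_matrix_mult inner_add_right power2_norm_eq_inner)

lemma cg_loop_Suc_iterates:
  "cg_loop (Suc f) g H eps delta zeta (cg_y j) (cg_r j) (cg_p j) =
    (if cg_p j \<bullet> ((H + mat (2 * eps)) *v cg_p j) \<le> eps * (norm (cg_p j))\<^sup>2
     then (cg_boundary delta (cg_y j) (cg_p j), BND_NEG)
     else if delta \<le> norm (cg_y (Suc j)) then (cg_boundary delta (cg_y j) (cg_p j), BND_NORM)
     else if norm (cg_r (Suc j)) \<le> zeta / 2 * min (norm g) (eps * norm (cg_y (Suc j)))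
     then (cg_y (Suc j), INT_RES)
     else cg_loop f g H eps delta zeta (cg_y (Suc j)) (cg_r (Suc j)) (cg_p (Suc j)))"
  by (simp add: Let_def cg_Suc cg_alpha_def cg_beta_def)

lemma model_bound_if_nonpos: "model s \<le> 0 \<Longrightarrow> model s \<le> eps / 2 * (norm s)\<^sup>2"
  using mult_nonneg_nonneg[OF eps_nonneg zero_le_power2[of "norm s"]] by simp

lemma model_bound_at_bnd_neg:
  assumes "positive_curvature j" and "norm (cg_y j) < delta"
    and "cg_p j \<bullet> ((H + mat (2 * eps)) *v cg_p j) \<le> eps * (norm (cg_p j))\<^sup>2"
    and s: "s = cg_boundary delta (cg_y j) (cg_p j)"
  shows "model s \<le> eps / 2 * (norm s)\<^sup>2"
proof (cases "cg_p j = 0")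
  case True
  then show ?thesis
    using s model_cg_y_nonpos[OF assms(1)] model_bound_if_nonpos by simp
next
  case False
  then obtain \<sigma> where "0 \<le> \<sigma>" "s = cg_y j + \<sigma> *\<^sub>R cg_p j"
    using cg_boundary_obtain[OF assms(2)] s by metis
  then show ?thesis
    using model_bound_at_negative_curvature[OF assms(1) _ eps_nonneg] assms(3) by simp
qed

lemma model_bound_at_bnd_norm:
  assumes curv: "positive_curvature (Suc j)" and inside: "norm (cg_y j) < delta"
    and outside: "delta \<le> norm (cg_y (Suc j))"
    and s: "s = cg_boundary delta (cg_y j) (cg_p j)"
  shows "model s \<le> eps / 2 * (norm s)\<^sup>2"
proof -
  have curv_j: "0 < cg_p j \<bullet> ((H + mat (2 * eps)) *v cg_p j)" and "positive_curvature j"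
    using curv by (simp_all add: positive_curvature_Suc)
  then have "cg_p j \<noteq> 0"
    by auto
  then obtain \<sigma> where "0 \<le> \<sigma>" "norm (cg_y j + \<sigma> *\<^sub>R cg_p j) = delta"
    and "s = cg_y j + \<sigma> *\<^sub>R cg_p j"
    using cg_boundary_obtain[OF inside] s by metis
  moreover have "\<sigma> \<le> cg_alpha j"
    using boundary_param_le[OF inside cg_alpha_nonneg[OF curv_j]] outside calculation(2)
    by (simp add: cg_Suc(1))
  ultimately show ?thesis
    using model_decreases_along_cg_p[OF curv] model_cg_y_nonpos[OF \<open>positive_curvature j\<close>]
      model_bound_if_nonpos by (meson order_trans)
qed

lemma cg_loop_model_bound:
  assumes "positive_curvature j" and "norm (cg_y j) < delta"
    and "s = fst (cg_loop f g H eps delta zeta (cg_y j) (cg_r j) (cg_p j))"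
  shows "model s \<le> eps / 2 * (norm s)\<^sup>2"
  using assms
proof (induction f arbitrary: j)
  case 0
  then show ?case
    using model_cg_y_nonpos model_bound_if_nonpos by simp
next
  case (Suc f)
  note loop = Suc.prems(3)[unfolded cg_loop_Suc_iterates]
  let ?curv = "cg_p j \<bullet> ((H + mat (2 * eps)) *v cg_p j)"
  show ?case
  proof (cases "?curv \<le> eps * (norm (cg_p j))\<^sup>2")
    case True
    then show ?thesis
      using loop model_bound_at_bnd_neg[OF Suc.prems(1,2)] by simp
  next
    case not_neg: False
    then have "0 < ?curv"
      using mult_nonneg_nonneg[OF eps_nonneg zero_le_power2[of "norm (cg_p j)"]] by linarith
    then have curv: "positive_curvature (Suc j)"
      using Suc.prems(1) by (simp add: positive_curvature_Suc)
    consider "delta \<le> norm (cg_y (Suc j))"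
      | "norm (cg_y (Suc j)) < delta" "s = cg_y (Suc j)"
      | "norm (cg_y (Suc j)) < delta"
        "s = fst (cg_loop f g H eps delta zeta (cg_y (Suc j)) (cg_r (Suc j)) (cg_p (Suc j)))"
      using loop not_neg by (auto split: if_splits)
    then show ?thesis
    proof cases
      case 1
      then show ?thesis
        using loop not_neg model_bound_at_bnd_norm[OF curv Suc.prems(2)] by simp
    next
      case 2
      then show ?thesis
        using model_cg_y_nonpos[OF curv] model_bound_if_nonpos by simp
    next
      case 3
      then show ?thesis
        using Suc.IH[OF curv] by simp
    qed
  qed
qed

end

theorem lemma3p3:
  fixes g :: "real^'n" and H :: "real^'n^'n"
    and eps delta zeta :: real and kmax :: nat
  assumes "g \<noteq> 0"
    and "transpose H = H"
    and "eps > 0" and "delta > 0"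
    and "0 < zeta" and "zeta < 1"
    and "kmax \<le> CARD('n)"
  shows "let s = fst (algorithm2 g H eps delta zeta kmax)
         in g \<bullet> s + 1/2 * (s \<bullet> (H *v s)) \<le> - 1/2 * eps * (norm s)\<^sup>2"
proof -
  interpret truncated_cg g H eps
    using assms(2,3) by unfold_locales simp_all
  define s where "s = fst (algorithm2 g H eps delta zeta kmax)"
  have "model s \<le> eps / 2 * (norm s)\<^sup>2"
    using cg_loop_model_bound[of 0 delta s kmax zeta] assms(4) by (simp add: s_def algorithm2_def)
  then show ?thesis
    unfolding s_def[symmetric] Let_def model_eq by simp
qed

end
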